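(* In the setting below, for every mask $m\in\{0,1\}^{|\mathrm H|}$, $$\Delta\mathcal L\le\sum_{h=1}^{|\mathrm H|}(1-m_h)\,\mathrm{HIS}_h+\frac{c}{2}\,\|W^O\|_2^2\sum_{h=1}^{|\mathrm H|}(1-m_h)\,\mathbb E_{x\sim\mathcal D}\bigl[\|A_h(x)\|_F^2\bigr],$$ with $c=\tfrac14$ if $\ell$ is binary (sigmoid) cross-entropy (so the coefficient is $\tfrac18\|W^O\|_2^2$) and $c=\tfrac12$ if $\ell$ is multiclass softmax cross-entropy (so the coefficient is $\tfrac14\|W^O\|_2^2$).
   Context: Setting: a multi-head attention layer with $|\mathrm H|$ heads; for each input $x\sim\mathcal D$, head $h$ outputs $A_h(x)\in\mathbb R^{n\times d_v}$ over $n$ tokens and $\mathbf y(x)=\operatorname{Concat}(A_1(x),\dots,A_{|\mathrm H|}(x))\in\mathbb R^{n\times d}$, $d=|\mathrm H|d_v$. For a mask $m\in\{0,1\}^{|\mathrm H|}$, $\mathbf y_m(x)=\operatorname{Concat}(m_1A_1(x),\dots,m_{|\mathrm H|}A_{|\mathrm H|}(x))$. The loss is $\mathcal L(x,\mathbf y)=\frac1n\sum_{t=1}^n\ell\bigl(\mathbf y(t)W^O;c_t(x)\bigr)$, where $\mathbf y(t)$ is the $t$-th row, $W^O\in\mathbb R^{d\times C}$ is a fixed output projection ($C=1$ in the binary case), $c_t(x)$ are labels and $\ell$ is binary cross-entropy $\ell(z;c)=-c\log\sigma(z)-(1-c)\log(1-\sigma(z))$ or multiclass cross-entropy $\ell(\mathbf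 z;c)=-\log\mathrm{softmax}(\mathbf z)_c$. Token-averaged Frobenius inner product/norm: $\langle U,V\rangle_F=\frac1n\sum_{i}\langle U(i),V(i)\rangle$, $\|U\|_F^2=\langle U,U\rangle_F$. $\mathrm{HIS}_h=\mathbb E_{x\sim\mathcal D}|\langle\nabla_{A_h}\mathcal L(x,\mathbf y(x)),A_h(x)\rangle_F|$ (gradient w.r.t. the token-averaged inner product), $\Delta\mathcal L=\mathbb E_{x\sim\mathcal D}[\mathcal L(x,\mathbf y_m(x))-\mathcal L(x,\mathbf y(x))]$; all expectations assumed finite. $\|W^O\|_2$ is the spectral norm. *)

theory Defs
  imports "HOL-Probability.Probability"
begin

text \<open>Matrices are represented as functions on nat indices with explicit bounds.
  A head output A_h(x) in R^{n x d_v} is  (\<lambda>t k. A h x t k)  with t < n, k < d_v.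
  A layer output y in R^{n x d} is  (\<lambda>t j. y t j)  with t < n, j < d = H * d_v.
  W^O in R^{d x C} is  (\<lambda>j c. W j c)  with j < d, c < C.\<close>

datatype lossKind = BinaryCE | MulticlassCE

definition sigmoid :: "real \<Rightarrow> real" where
  "sigmoid z = 1 / (1 + exp (- z))"

definition bce :: "real \<Rightarrow> real \<Rightarrow> real" where
  "bce z c = - c * ln (sigmoid z) - (1 - c) * ln (1 - sigmoid z)"

definition softmax :: "nat \<Rightarrow> (nat \<Rightarrow> real) \<Rightarrow> nat \<Rightarrow> real" where
  "softmax C z c = exp (z c) / (\<Sum>j<C. exp (z j))"

definition softmax_ce :: "nat \<Rightarrow> (nat \<Rightarrow> real) \<Rightarrow> nat \<Rightarrow> real" where
  "softmax_ce C z c = - ln (softmax C z c)"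

text \<open>per-token loss; in the binary case C = 1 and the logit is z 0\<close>
definition ell :: "lossKind \<Rightarrow> nat \<Rightarrow> (nat \<Rightarrow> real) \<Rightarrow> nat \<Rightarrow> real" where
  "ell kind C z c = (case kind of
      BinaryCE \<Rightarrow> bce (z 0) (real c)
    | MulticlassCE \<Rightarrow> softmax_ce C z c)"

definition concat_heads :: "nat \<Rightarrow> nat \<Rightarrow> (nat \<Rightarrow> nat \<Rightarrow> nat \<Rightarrow> real) \<Rightarrow> nat \<Rightarrow> nat \<Rightarrow> real" where
  "concat_heads H dv B t j = (if j < H * dv then B (j div dv) t (j mod dv) else 0)"

definition logits :: "nat \<Rightarrow> (nat \<Rightarrow> nat \<Rightarrow> real) \<Rightarrow> (nat \<Rightarrow> nat \<Rightarrow> real) \<Rightarrow> nat \<Rightarrow> nat \<Rightarrow> real" where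
  "logits d W y t = (\<lambda>c. \<Sum>j<d. y t j * W j c)"

definition tokLoss :: "lossKind \<Rightarrow> nat \<Rightarrow> nat \<Rightarrow> nat \<Rightarrow> (nat \<Rightarrow> nat \<Rightarrow> real)
    \<Rightarrow> (nat \<Rightarrow> nat) \<Rightarrow> (nat \<Rightarrow> nat \<Rightarrow> real) \<Rightarrow> real" where
  "tokLoss kind n d C W lab y = (1 / real n) * (\<Sum>t<n. ell kind C (logits d W y t) (lab t))"

definition frob2 :: "nat \<Rightarrow> nat \<Rightarrow> (nat \<Rightarrow> nat \<Rightarrow> real) \<Rightarrow> real" where
  "frob2 n dv U = (1 / real n) * (\<Sum>t<n. \<Sum>k<dv. (U t k)\<^sup>2)"

definition specnorm :: "nat \<Rightarrow> nat \<Rightarrow> (nat \<Rightarrow> nat \<Rightarrow> real) \<Rightarrow> real" where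
  "specnorm d C W = Sup {sqrt (\<Sum>c<C. (\<Sum>j<d. u j * W j c)\<^sup>2) | u. (\<Sum>j<d. (u j)\<^sup>2) \<le> 1}"

definition perturb_head :: "(nat \<Rightarrow> nat \<Rightarrow> nat \<Rightarrow> real) \<Rightarrow> nat \<Rightarrow> real \<Rightarrow> nat \<Rightarrow> nat \<Rightarrow> nat \<Rightarrow> real" where
  "perturb_head B h eps = (\<lambda>h' t k. if h' = h then B h' t k + eps * B h' t k else B h' t k)"

text \<open><grad_{A_h} L(x, y(x)), A_h(x)>_F  (gradient for the token-averaged inner product)
  = directional derivative of A_h \<mapsto> L(x, y) in direction A_h(x).\<close>
definition gradInner :: "lossKind \<Rightarrow> nat \<Rightarrow> nat \<Rightarrow> nat \<Rightarrow> nat \<Rightarrow> (nat \<Rightarrow> nat \<Rightarrow> real)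
    \<Rightarrow> (nat \<Rightarrow> nat) \<Rightarrow> (nat \<Rightarrow> nat \<Rightarrow> nat \<Rightarrow> real) \<Rightarrow> nat \<Rightarrow> real" where
  "gradInner kind n H dv C W lab B h =
     deriv (\<lambda>eps. tokLoss kind n (H * dv) C W lab (concat_heads H dv (perturb_head B h eps))) 0"

end

(*
  Restricted to a line z + s v, each token loss has second derivative at most c |v|^2: for the
  sigmoid cross-entropy it is sigma (1 - sigma) v^2 with sigma (1 - sigma) <= 1/4, and for the
  softmax cross-entropy it is the variance of v under the softmax distribution, which is at most
  |v|^2 / 2.  By Taylor's theorem the loss at y + Delta is therefore at most its linearisation
  at y plus c/2 |Delta W^O|^2 <= c/2 ||W^O||^2 |Delta|^2.  Masking is the perturbation
  Delta = sum_h (m_h - 1) A_h (each A_h placed in the columns of head h), so the linear term is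
  sum_h (m_h - 1) <grad_{A_h} L, A_h> <= sum_h (1 - m_h) |<grad_{A_h} L, A_h>| and the quadratic
  term splits as sum_h (1 - m_h) ||A_h||^2.  Integrating over x gives the bound.
*)
theory Submission
  imports Defs
begin

lemma second_order_Taylor_upper_bound:
  fixes f f' f'' :: "real \<Rightarrow> real"
  assumes "\<And>s. (f has_real_derivative f' s) (at s)"
    and "\<And>s. (f' has_real_derivative f'' s) (at s)"
    and "\<And>s. f'' s \<le> K"
  shows "f 1 \<le> f 0 + f' 0 + K / 2"
proof -
  define diff where "diff = (\<lambda>k::nat. if k = 0 then f else if k = 1 then f' else f'')"
  have "\<exists>t. 0 < t \<and> t < 1 \<and>
      f 1 = (\<Sum>k<2. diff k 0 / fact k * 1 ^ k) + diff 2 t / fact 2 * 1 ^ 2"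
    by (rule Maclaurin) (auto simp: diff_def assms(1,2) less_2_cases_iff)
  then obtain t where "f 1 = (\<Sum>k<2. diff k 0 / fact k * 1 ^ k) + diff 2 t / fact 2 * 1 ^ 2"
    by blast
  then have "f 1 = f 0 + f' 0 + f'' t / 2"
    by (simp add: diff_def numeral_2_eq_2 lessThan_Suc)
  then show ?thesis
    using assms(3)[of t] by simp
qed

lemma mult_one_minus_le_quarter:
  fixes p :: real
  shows "p * (1 - p) \<le> 1 / 4"
  using zero_le_power2[of "2 * p - 1"] by (simp add: power2_eq_square algebra_simps)

lemma weighted_variance_le_half_sum_squares:
  fixes p v :: "nat \<Rightarrow> real"
  assumes p_nonneg: "\<And>j. j < C \<Longrightarrow> 0 \<le> p j" and p_sum: "(\<Sum>j<C. p j) = 1"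
  shows "(\<Sum>j<C. p j * (v j)\<^sup>2) - (\<Sum>j<C. p j * v j)\<^sup>2 \<le> (\<Sum>j<C. (v j)\<^sup>2) / 2"
proof -
  have pairs: "(\<Sum>i<C. \<Sum>j<C. p i * p j * (v i - v j)\<^sup>2)
      = 2 * ((\<Sum>j<C. p j * (v j)\<^sup>2) - (\<Sum>j<C. p j * v j)\<^sup>2)"
  proof -
    have "p i * p j * (v i - v j)\<^sup>2
        = p i * (p j * (v j)\<^sup>2) + p i * (v i)\<^sup>2 * p j - 2 * (p i * v i) * (p j * v j)" for i j
      by (simp add: power2_eq_square algebra_simps)
    then have "(\<Sum>i<C. \<Sum>j<C. p i * p j * (v i - v j)\<^sup>2)
        = (\<Sum>i<C. p i) * (\<Sum>j<C. p j * (v j)\<^sup>2) + (\<Sum>i<C. p i * (v i)\<^sup>2) * (\<Sum>j<C. p j)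
          - (\<Sum>i<C. 2 * (p i * v i)) * (\<Sum>j<C. p j * v j)"
      by (simp only: sum.distrib sum_subtractf sum_product)
    then show ?thesis
      by (simp add: p_sum power2_eq_square sum_distrib_left[symmetric])
  qed
  \<comment> \<open>off the diagonal \<open>(a - b)\<^sup>2 \<le> 2 a\<^sup>2 + 2 b\<^sup>2\<close>; on it both sides vanish\<close>
  have "(v i - v j)\<^sup>2 \<le> 2 * (v i)\<^sup>2 + 2 * (v j)\<^sup>2 - (if i = j then 4 * (v i)\<^sup>2 else 0)" for i j
    using zero_le_power2[of "v i + v j"] by (auto simp: power2_eq_square algebra_simps)
  then have "(\<Sum>i<C. \<Sum>j<C. p i * p j * (v i - v j)\<^sup>2)
      \<le> (\<Sum>i<C. \<Sum>j<C. p i * p j * (2 * (v i)\<^sup>2 + 2 * (v j)\<^sup>2 - (if i = j then 4 * (v i)\<^sup>2 else 0)))"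
    using p_nonneg by (intro sum_mono mult_left_mono) auto
  also have "\<dots> = (\<Sum>i<C. 2 * (p i * (v i)\<^sup>2)) * (\<Sum>j<C. p j)
      + (\<Sum>i<C. p i) * (\<Sum>j<C. 2 * (p j * (v j)\<^sup>2)) - (\<Sum>i<C. 4 * (p i)\<^sup>2 * (v i)\<^sup>2)"
  proof -
    have "p i * p j * (2 * (v i)\<^sup>2 + 2 * (v j)\<^sup>2 - (if i = j then 4 * (v i)\<^sup>2 else 0))
        = 2 * (p i * (v i)\<^sup>2) * p j + p i * (2 * (p j * (v j)\<^sup>2))
          - (if i = j then 4 * (p i)\<^sup>2 * (v i)\<^sup>2 else 0)" for i j
      by (simp add: power2_eq_square algebra_simps)
    then show ?thesis
      by (simp add: sum.distrib sum_subtractf sum_product)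
  qed
  also have "\<dots> = 4 * (\<Sum>i<C. p i * (1 - p i) * (v i)\<^sup>2)"
    unfolding p_sum
    by (simp add: sum_distrib_left sum.distrib[symmetric] sum_subtractf[symmetric]
        power2_eq_square algebra_simps)
  also have "\<dots> \<le> 4 * (\<Sum>i<C. 1 / 4 * (v i)\<^sup>2)"
    using mult_one_minus_le_quarter by (intro mult_left_mono sum_mono mult_right_mono) auto
  also have "\<dots> = (\<Sum>i<C. (v i)\<^sup>2)"
    by (simp add: sum_distrib_left)
  finally show ?thesis
    unfolding pairs by simp
qed

lemma bce_eq: "bce z c = ln (1 + exp (- z)) + (1 - c) * z"
proof -
  have pos: "0 < 1 + exp (- z)"
    by (simp add: add_pos_pos)
  have "1 - sigmoid z = exp (- z) / (1 + exp (- z))"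
    using pos by (simp add: sigmoid_def field_simps)
  then have "ln (1 - sigmoid z) = - z - ln (1 + exp (- z))"
    using pos by (simp add: ln_div)
  moreover have "ln (sigmoid z) = - ln (1 + exp (- z))"
    using pos by (simp add: sigmoid_def ln_div)
  ultimately show ?thesis
    unfolding bce_def by (simp only:) (simp add: algebra_simps)
qed

lemma softmax_ce_eq:
  assumes "c < C"
  shows "softmax_ce C z c = ln (\<Sum>j<C. exp (z j)) - z c"
proof -
  have "0 < (\<Sum>j<C. exp (z j))"
    using assms by (intro sum_pos) auto
  then show ?thesis
    by (simp add: softmax_ce_def softmax_def ln_div)
qed

lemma sum_softmax_mult:
  "(\<Sum>j<C. softmax C z j * v j) = (\<Sum>j<C. exp (z j) * v j) / (\<Sum>j<C. exp (z j))"
  by (simp add: softmax_def sum_divide_distrib)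

definition ell_deriv :: "lossKind \<Rightarrow> nat \<Rightarrow> (nat \<Rightarrow> real) \<Rightarrow> nat \<Rightarrow> (nat \<Rightarrow> real) \<Rightarrow> real" where
  "ell_deriv kind C z c v = (case kind of
      BinaryCE \<Rightarrow> (sigmoid (z 0) - real c) * v 0
    | MulticlassCE \<Rightarrow> (\<Sum>j<C. softmax C z j * v j) - v c)"

definition ell_deriv2 :: "lossKind \<Rightarrow> nat \<Rightarrow> (nat \<Rightarrow> real) \<Rightarrow> (nat \<Rightarrow> real) \<Rightarrow> real" where
  "ell_deriv2 kind C z v = (case kind of
      BinaryCE \<Rightarrow> sigmoid (z 0) * (1 - sigmoid (z 0)) * (v 0)\<^sup>2
    | MulticlassCE \<Rightarrow> (\<Sum>j<C. softmax C z j * (v j)\<^sup>2) - (\<Sum>j<C. softmax C z j * v j)\<^sup>2)"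

definition ell_curvature :: "lossKind \<Rightarrow> real" where
  "ell_curvature kind = (if kind = BinaryCE then 1 / 4 else 1 / 2)"

lemma has_real_derivative_ell_along_line:
  assumes "kind = MulticlassCE \<Longrightarrow> c < C"
  shows "((\<lambda>s. ell kind C (\<lambda>i. z i + s * v i) c) has_real_derivative
           ell_deriv kind C (\<lambda>i. z i + s * v i) c v) (at s)"
proof (cases kind)
  case BinaryCE
  have "0 < 1 + exp (- (z 0 + s * v 0))"
    by (simp add: add_pos_pos)
  then have "((\<lambda>s. ln (1 + exp (- (z 0 + s * v 0))) + (1 - real c) * (z 0 + s * v 0))
      has_real_derivative ell_deriv kind C (\<lambda>i. z i + s * v i) c v) (at s)"
    unfolding ell_deriv_def BinaryCE
    by (auto intro!: derivative_eq_intros simp: sigmoid_def field_simps)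
  then show ?thesis
    by (simp add: ell_def BinaryCE bce_eq)
next
  case MulticlassCE
  with assms have "c < C"
    by simp
  then have "0 < (\<Sum>j<C. exp (z j + s * v j))"
    by (intro sum_pos) auto
  then have "((\<lambda>s. ln (\<Sum>j<C. exp (z j + s * v j)) - (z c + s * v c))
      has_real_derivative ell_deriv kind C (\<lambda>i. z i + s * v i) c v) (at s)"
    unfolding ell_deriv_def MulticlassCE sum_softmax_mult
    by (auto intro!: derivative_eq_intros simp: field_simps)
  then show ?thesis
    by (simp add: ell_def MulticlassCE softmax_ce_eq[OF \<open>c < C\<close>])
qed

lemma has_real_derivative_ell_deriv_along_line:
  assumes "kind = MulticlassCE \<Longrightarrow> 0 < C"
  shows "((\<lambda>s. ell_deriv kind C (\<lambda>i. z i + s * v i) c v) has_real_derivative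
           ell_deriv2 kind C (\<lambda>i. z i + s * v i) v) (at s)"
proof (cases kind)
  case BinaryCE
  have "0 < 1 + exp (- (z 0 + s * v 0))"
    by (simp add: add_pos_pos)
  then show ?thesis
    unfolding ell_deriv_def ell_deriv2_def BinaryCE sigmoid_def
    by (auto intro!: derivative_eq_intros simp: field_simps power2_eq_square)
next
  case MulticlassCE
  define e where "e j = exp (z j + s * v j)" for j
  have "0 < (\<Sum>j<C. e j)"
    using assms MulticlassCE by (intro sum_pos) (auto simp: e_def)
  have e_deriv: "((\<lambda>s. exp (z j + s * v j)) has_real_derivative exp (z j + s * v j) * v j) (at s)" for j
    by (auto intro!: derivative_eq_intros)
  have quotient_rule: "((\<lambda>s. (\<Sum>j<C. exp (z j + s * v j) * v j) / (\<Sum>j<C. exp (z j + s * v j)))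
      has_real_derivative
        ((\<Sum>j<C. e j * v j * v j) * (\<Sum>j<C. e j) - (\<Sum>j<C. e j * v j) * (\<Sum>j<C. e j * v j))
        / ((\<Sum>j<C. e j) * (\<Sum>j<C. e j))) (at s)"
    using \<open>0 < (\<Sum>j<C. e j)\<close> unfolding e_def
    by (intro DERIV_divide DERIV_sum DERIV_cmult_right e_deriv) auto
  have "((\<Sum>j<C. e j * v j * v j) * (\<Sum>j<C. e j) - (\<Sum>j<C. e j * v j) * (\<Sum>j<C. e j * v j))
        / ((\<Sum>j<C. e j) * (\<Sum>j<C. e j))
      = (\<Sum>j<C. e j * (v j)\<^sup>2) / (\<Sum>j<C. e j) - ((\<Sum>j<C. e j * v j) / (\<Sum>j<C. e j))\<^sup>2"
    using \<open>0 < (\<Sum>j<C. e j)\<close> by (simp add: field_simps power2_eq_square)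
  with DERIV_diff[OF quotient_rule DERIV_const, of "v c"] show ?thesis
    unfolding ell_deriv_def ell_deriv2_def MulticlassCE sum_softmax_mult e_def by simp
qed

lemma ell_deriv2_le:
  assumes "kind = BinaryCE \<Longrightarrow> C = 1" and "kind = MulticlassCE \<Longrightarrow> 0 < C"
  shows "ell_deriv2 kind C z v \<le> ell_curvature kind * (\<Sum>i<C. (v i)\<^sup>2)"
proof (cases kind)
  case BinaryCE
  have "sigmoid (z 0) * (1 - sigmoid (z 0)) * (v 0)\<^sup>2 \<le> 1 / 4 * (v 0)\<^sup>2"
    by (intro mult_right_mono mult_one_minus_le_quarter) auto
  then show ?thesis
    using assms(1) BinaryCE by (simp add: ell_deriv2_def ell_curvature_def)
next
  case MulticlassCE
  have "0 < (\<Sum>j<C. exp (z j))"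
    using assms(2) MulticlassCE by (intro sum_pos) auto
  then have "(\<Sum>j<C. softmax C z j) = 1"
    by (simp add: softmax_def sum_divide_distrib[symmetric])
  then have "(\<Sum>j<C. softmax C z j * (v j)\<^sup>2) - (\<Sum>j<C. softmax C z j * v j)\<^sup>2
      \<le> (\<Sum>j<C. (v j)\<^sup>2) / 2"
    by (intro weighted_variance_le_half_sum_squares) (auto simp: softmax_def sum_nonneg)
  then show ?thesis
    using MulticlassCE by (simp add: ell_deriv2_def ell_curvature_def)
qed

lemma ell_le_linear_plus_quadratic:
  assumes "kind = BinaryCE \<Longrightarrow> C = 1" and "kind = MulticlassCE \<Longrightarrow> c < C"
  shows "ell kind C (\<lambda>i. z i + v i) c
    \<le> ell kind C z c + ell_deriv kind C z c v + ell_curvature kind / 2 * (\<Sum>i<C. (v i)\<^sup>2)"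
proof -
  have "(\<lambda>s. ell kind C (\<lambda>i. z i + s * v i) c) 1
      \<le> (\<lambda>s. ell kind C (\<lambda>i. z i + s * v i) c) 0 + ell_deriv kind C (\<lambda>i. z i + 0 * v i) c v
        + ell_curvature kind * (\<Sum>i<C. (v i)\<^sup>2) / 2"
    by (rule second_order_Taylor_upper_bound[OF has_real_derivative_ell_along_line
          has_real_derivative_ell_deriv_along_line ell_deriv2_le]) (use assms in auto)
  then show ?thesis
    by simp
qed

lemma norm_vecmat_le_specnorm:
  assumes "(\<Sum>j<d. (u j)\<^sup>2) \<le> 1"
  shows "sqrt (\<Sum>c<C. (\<Sum>j<d. u j * W j c)\<^sup>2) \<le> specnorm d C W"
  unfolding specnorm_def
proof (rule cSup_upper)
  show "bdd_above {sqrt (\<Sum>c<C. (\<Sum>j<d. u j * W j c)\<^sup>2) | u. (\<Sum>j<d. (u j)\<^sup>2) \<le> 1}"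
  proof (rule bdd_aboveI, clarify)
    fix u :: "nat \<Rightarrow> real"
    assume u: "(\<Sum>j<d. (u j)\<^sup>2) \<le> 1"
    have "(\<Sum>j<d. u j * W j c)\<^sup>2 \<le> (\<Sum>j<d. (u j)\<^sup>2) * (\<Sum>j<d. (W j c)\<^sup>2)" for c
      by (rule Cauchy_Schwarz_ineq_sum)
    also have "\<dots> c \<le> (\<Sum>j<d. (W j c)\<^sup>2)" for c
      using u by (intro mult_left_le_one_le sum_nonneg) auto
    finally have "(\<Sum>j<d. u j * W j c)\<^sup>2 \<le> (\<Sum>j<d. (W j c)\<^sup>2)" for c .
    then show "sqrt (\<Sum>c<C. (\<Sum>j<d. u j * W j c)\<^sup>2) \<le> sqrt (\<Sum>c<C. \<Sum>j<d. (W j c)\<^sup>2)"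
      by (intro real_sqrt_le_mono sum_mono)
  qed
qed (use assms in blast)

lemma sum_sq_vecmat_le_specnorm:
  "(\<Sum>c<C. (\<Sum>j<d. u j * W j c)\<^sup>2) \<le> (specnorm d C W)\<^sup>2 * (\<Sum>j<d. (u j)\<^sup>2)"
proof (cases "(\<Sum>j<d. (u j)\<^sup>2) = 0")
  case True
  then have "\<forall>j<d. u j = 0"
    by (simp add: sum_nonneg_eq_0_iff)
  then show ?thesis
    by simp
next
  case False
  define q where "q = (\<Sum>j<d. (u j)\<^sup>2)"
  have "0 < q"
    using False by (simp add: q_def order_less_le sum_nonneg)
  have "(\<Sum>j<d. (u j / sqrt q)\<^sup>2) = 1"
    using \<open>0 < q\<close> by (simp add: power_divide sum_divide_distrib[symmetric] q_def)
  then have "(\<Sum>c<C. (\<Sum>j<d. u j / sqrt q * W j c)\<^sup>2) \<le> (specnorm d C W)\<^sup>2"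
    by (intro sqrt_le_D norm_vecmat_le_specnorm) simp
  moreover have "(\<Sum>c<C. (\<Sum>j<d. u j / sqrt q * W j c)\<^sup>2) = (\<Sum>c<C. (\<Sum>j<d. u j * W j c)\<^sup>2) / q"
    using \<open>0 < q\<close> by (simp add: power_divide sum_divide_distrib[symmetric])
  ultimately show ?thesis
    using \<open>0 < q\<close> by (simp add: q_def[symmetric] divide_le_eq mult.commute)
qed

definition tokLoss_deriv :: "lossKind \<Rightarrow> nat \<Rightarrow> nat \<Rightarrow> nat \<Rightarrow> (nat \<Rightarrow> nat \<Rightarrow> real)
    \<Rightarrow> (nat \<Rightarrow> nat) \<Rightarrow> (nat \<Rightarrow> nat \<Rightarrow> real) \<Rightarrow> (nat \<Rightarrow> nat \<Rightarrow> real) \<Rightarrow> real" where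
  "tokLoss_deriv kind n d C W lab Y D =
     1 / real n * (\<Sum>t<n. ell_deriv kind C (logits d W Y t) (lab t) (logits d W D t))"

definition only_head :: "(nat \<Rightarrow> nat \<Rightarrow> nat \<Rightarrow> real) \<Rightarrow> nat \<Rightarrow> nat \<Rightarrow> nat \<Rightarrow> nat \<Rightarrow> real" where
  "only_head B h = (\<lambda>h' t k. if h' = h then B h' t k else 0)"

lemma logits_add_scaled:
  "logits d W (\<lambda>t j. Y t j + s * D t j) t = (\<lambda>c. logits d W Y t c + s * logits d W D t c)"
  by (simp add: logits_def sum.distrib sum_distrib_left algebra_simps)

lemma logits_sum:
  "logits d W (\<lambda>t j. \<Sum>h<H. a h * D h t j) t = (\<lambda>c. \<Sum>h<H. a h * logits d W (D h) t c)"
  by (simp add: logits_def sum_distrib_left sum_distrib_right sum.swap[of _ "{..<d}"] algebra_simps)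

lemma ell_deriv_sum:
  "ell_deriv kind C z c (\<lambda>i. \<Sum>h<H. a h * w h i) = (\<Sum>h<H. a h * ell_deriv kind C z c (w h))"
  by (cases kind) (simp_all add: ell_deriv_def sum_distrib_left sum_distrib_right
      sum.swap[of _ "{..<H}"] sum_subtractf algebra_simps)

lemma tokLoss_deriv_sum:
  "tokLoss_deriv kind n d C W lab Y (\<lambda>t j. \<Sum>h<H. a h * D h t j)
    = (\<Sum>h<H. a h * tokLoss_deriv kind n d C W lab Y (D h))"
  by (simp add: tokLoss_deriv_def logits_sum ell_deriv_sum sum_distrib_left
      sum.swap[of _ "{..<H}"] algebra_simps)

lemma has_real_derivative_tokLoss_along_line:
  assumes "kind = MulticlassCE \<Longrightarrow> \<forall>t<n. lab t < C"
  shows "((\<lambda>s. tokLoss kind n d C W lab (\<lambda>t j. Y t j + s * D t j)) has_real_derivative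
           tokLoss_deriv kind n d C W lab Y D) (at 0)"
proof -
  have "((\<lambda>s. 1 / real n * (\<Sum>t<n. ell kind C (\<lambda>c. logits d W Y t c + s * logits d W D t c) (lab t)))
      has_real_derivative
        1 / real n * (\<Sum>t<n. ell_deriv kind C (\<lambda>c. logits d W Y t c + 0 * logits d W D t c) (lab t)
          (logits d W D t))) (at 0)"
    using assms by (intro DERIV_cmult DERIV_sum has_real_derivative_ell_along_line) auto
  then show ?thesis
    by (simp add: tokLoss_def tokLoss_deriv_def logits_add_scaled)
qed

lemma gradInner_eq_tokLoss_deriv:
  assumes "kind = MulticlassCE \<Longrightarrow> \<forall>t<n. lab t < C"
  shows "gradInner kind n H dv C W lab B h
    = tokLoss_deriv kind n (H * dv) C W lab (concat_heads H dv B) (concat_heads H dv (only_head B h))"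
proof -
  have "concat_heads H dv (perturb_head B h s)
      = (\<lambda>t j. concat_heads H dv B t j + s * concat_heads H dv (only_head B h) t j)" for s
    by (auto simp: fun_eq_iff concat_heads_def perturb_head_def only_head_def)
  then show ?thesis
    unfolding gradInner_def
    using has_real_derivative_tokLoss_along_line[OF assms] by (simp add: DERIV_imp_deriv)
qed

lemma tokLoss_le_linear_plus_quadratic:
  assumes "kind = BinaryCE \<Longrightarrow> C = 1" and "kind = MulticlassCE \<Longrightarrow> \<forall>t<n. lab t < C"
  shows "tokLoss kind n d C W lab (\<lambda>t j. Y t j + D t j)
    \<le> tokLoss kind n d C W lab Y + tokLoss_deriv kind n d C W lab Y D
      + ell_curvature kind / 2 * (specnorm d C W)\<^sup>2 * frob2 n d D"
proof -
  have token: "ell kind C (logits d W (\<lambda>t j. Y t j + D t j) t) (lab t)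
      \<le> ell kind C (logits d W Y t) (lab t) + ell_deriv kind C (logits d W Y t) (lab t) (logits d W D t)
        + ell_curvature kind / 2 * ((specnorm d C W)\<^sup>2 * (\<Sum>j<d. (D t j)\<^sup>2))" if "t < n" for t
  proof -
    have "ell kind C (\<lambda>c. logits d W Y t c + logits d W D t c) (lab t)
        \<le> ell kind C (logits d W Y t) (lab t) + ell_deriv kind C (logits d W Y t) (lab t) (logits d W D t)
          + ell_curvature kind / 2 * (\<Sum>c<C. (logits d W D t c)\<^sup>2)"
      by (rule ell_le_linear_plus_quadratic) (use assms that in auto)
    also have "(\<Sum>c<C. (logits d W D t c)\<^sup>2) \<le> (specnorm d C W)\<^sup>2 * (\<Sum>j<d. (D t j)\<^sup>2)"
      unfolding logits_def by (rule sum_sq_vecmat_le_specnorm)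
    finally show ?thesis
      using logits_add_scaled[of d W Y 1 D t] by (simp add: ell_curvature_def)
  qed
  have "tokLoss kind n d C W lab (\<lambda>t j. Y t j + D t j)
      \<le> 1 / real n * (\<Sum>t<n. ell kind C (logits d W Y t) (lab t)
          + ell_deriv kind C (logits d W Y t) (lab t) (logits d W D t)
          + ell_curvature kind / 2 * ((specnorm d C W)\<^sup>2 * (\<Sum>j<d. (D t j)\<^sup>2)))"
    unfolding tokLoss_def by (intro mult_left_mono sum_mono token) auto
  also have "\<dots> = tokLoss kind n d C W lab Y + tokLoss_deriv kind n d C W lab Y D
      + ell_curvature kind / 2 * (specnorm d C W)\<^sup>2 * frob2 n d D"
    by (simp add: tokLoss_def tokLoss_deriv_def frob2_def sum.distrib sum_distrib_left[symmetric]
        sum_divide_distrib[symmetric] ring_distribs mult_ac)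
  finally show ?thesis .
qed

lemma concat_heads_scaled_eq_sum:
  "concat_heads H dv (\<lambda>h t k. a h * B h t k)
    = (\<lambda>t j. \<Sum>h<H. a h * concat_heads H dv (only_head B h) t j)"
proof (intro ext)
  fix t j
  show "concat_heads H dv (\<lambda>h t k. a h * B h t k) t j
      = (\<Sum>h<H. a h * concat_heads H dv (only_head B h) t j)"
  proof (cases "j < H * dv")
    case True
    then have "j div dv < H"
      by (simp add: less_mult_imp_div_less)
    with True show ?thesis
      by (simp add: concat_heads_def only_head_def if_distrib[of "\<lambda>x. _ * x"] cong: if_cong)
  qed (simp add: concat_heads_def)
qed

lemma frob2_concat_heads:
  "frob2 n (H * dv) (concat_heads H dv B) = (\<Sum>h<H. frob2 n dv (B h))"
proof -
  have "(\<Sum>j<H * dv. (concat_heads H dv B t j)\<^sup>2) = (\<Sum>h<H. \<Sum>k<dv. (B h t k)\<^sup>2)" for t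
  proof -
    have "concat_heads H dv B t (k + h * dv) = B h t k" if "h < H" "k < dv" for h k
    proof -
      have "k + h * dv < Suc h * dv"
        using that by simp
      also have "\<dots> \<le> H * dv"
        using that by (intro mult_right_mono) auto
      finally have "k + h * dv < H * dv" .
      then show ?thesis
        using that by (simp add: concat_heads_def)
    qed
    then show ?thesis
      by (simp add: sum_mult_product)
  qed
  then show ?thesis
    by (simp add: frob2_def sum_distrib_left sum.swap[of _ "{..<H}"])
qed

lemma tokLoss_mask_diff_le:
  fixes B :: "nat \<Rightarrow> nat \<Rightarrow> nat \<Rightarrow> real" and m :: "nat \<Rightarrow> real"
  assumes "kind = BinaryCE \<Longrightarrow> C = 1" and lab: "kind = MulticlassCE \<Longrightarrow> \<forall>t<n. lab t < C"
    and m: "\<forall>h<H. m h \<in> {0, 1}"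
  shows "tokLoss kind n (H * dv) C W lab (concat_heads H dv (\<lambda>h t k. m h * B h t k))
      - tokLoss kind n (H * dv) C W lab (concat_heads H dv B)
    \<le> (\<Sum>h<H. (1 - m h) * \<bar>gradInner kind n H dv C W lab B h\<bar>)
      + ell_curvature kind / 2 * (specnorm (H * dv) C W)\<^sup>2 * (\<Sum>h<H. (1 - m h) * frob2 n dv (B h))"
proof -
  define Y where "Y = concat_heads H dv B"
  define D where "D = concat_heads H dv (\<lambda>h t k. (m h - 1) * B h t k)"
  have masked: "concat_heads H dv (\<lambda>h t k. m h * B h t k) = (\<lambda>t j. Y t j + D t j)"
    by (auto simp: fun_eq_iff Y_def D_def concat_heads_def algebra_simps)
  have "tokLoss_deriv kind n (H * dv) C W lab Y D
      = (\<Sum>h<H. (m h - 1) * gradInner kind n H dv C W lab B h)"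
    by (simp add: D_def Y_def concat_heads_scaled_eq_sum tokLoss_deriv_sum gradInner_eq_tokLoss_deriv[OF lab])
  also have "\<dots> \<le> (\<Sum>h<H. (1 - m h) * \<bar>gradInner kind n H dv C W lab B h\<bar>)"
    using m by (intro sum_mono) auto
  finally have deriv_le: "tokLoss_deriv kind n (H * dv) C W lab Y D
      \<le> (\<Sum>h<H. (1 - m h) * \<bar>gradInner kind n H dv C W lab B h\<bar>)" .
  have "frob2 n dv (\<lambda>t k. (m h - 1) * B h t k) = (1 - m h) * frob2 n dv (B h)" if "h < H" for h
  proof -
    have "(m h - 1)\<^sup>2 = 1 - m h"
      using m that by auto
    then show ?thesis
      by (simp add: frob2_def power_mult_distrib sum_distrib_left[symmetric] mult.left_commute)
  qed
  then have frob2_D: "frob2 n (H * dv) D = (\<Sum>h<H. (1 - m h) * frob2 n dv (B h))"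
    unfolding D_def frob2_concat_heads by (intro sum.cong) auto
  show ?thesis
    using tokLoss_le_linear_plus_quadratic[of kind C n lab "H * dv" W Y D] assms deriv_le
    unfolding masked frob2_D Y_def[symmetric] by auto
qed

theorem mainTheorem4:
  fixes M :: "'x measure"
    and kind :: lossKind
    and H dv n C :: nat
    and A :: "nat \<Rightarrow> 'x \<Rightarrow> nat \<Rightarrow> nat \<Rightarrow> real"
    and W :: "nat \<Rightarrow> nat \<Rightarrow> real"
    and lab :: "'x \<Rightarrow> nat \<Rightarrow> nat"
    and m :: "nat \<Rightarrow> real"
  defines "Lfull \<equiv> (\<lambda>x. tokLoss kind n (H * dv) C W (lab x) (concat_heads H dv (\<lambda>h. A h x)))"
      and "Lmask \<equiv> (\<lambda>x. tokLoss kind n (H * dv) C W (lab x)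
                            (concat_heads H dv (\<lambda>h t k. m h * A h x t k)))"
      and "HIS \<equiv> (\<lambda>h. \<integral>x. \<bar>gradInner kind n H dv C W (lab x) (\<lambda>h'. A h' x) h\<bar> \<partial>M)"
      and "cst \<equiv> (if kind = BinaryCE then 1/4 else 1/2 :: real)"
  assumes "prob_space M"
    and "n > 0"
    and "kind = BinaryCE \<Longrightarrow> C = 1 \<and> (\<forall>x\<in>space M. \<forall>t<n. lab x t \<in> {0, 1})"
    and "kind = MulticlassCE \<Longrightarrow> (\<forall>x\<in>space M. \<forall>t<n. lab x t < C)"
    and "\<forall>h<H. m h \<in> {0, 1}"
    and "integrable M Lfull"
    and "integrable M Lmask"
    and "\<forall>h<H. integrable M (\<lambda>x. \<bar>gradInner kind n H dv C W (lab x) (\<lambda>h'. A h' x) h\<bar>)"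
    and "\<forall>h<H. integrable M (\<lambda>x. frob2 n dv (A h x))"
  shows "(\<integral>x. (Lmask x - Lfull x) \<partial>M)
           \<le> (\<Sum>h<H. (1 - m h) * HIS h)
             + cst / 2 * (specnorm (H * dv) C W)\<^sup>2
                 * (\<Sum>h<H. (1 - m h) * (\<integral>x. frob2 n dv (A h x) \<partial>M))"
proof -
  define G where "G h x = \<bar>gradInner kind n H dv C W (lab x) (\<lambda>h'. A h' x) h\<bar>" for h x
  define F where "F h x = frob2 n dv (A h x)" for h x
  define Q where "Q = cst / 2 * (specnorm (H * dv) C W)\<^sup>2"
  have G_int: "integrable M (G h)" and F_int: "integrable M (F h)" if "h < H" for h
    using assms(12,13) that by (simp_all add: G_def[abs_def] F_def[abs_def])
  have "Lmask x - Lfull x \<le> (\<Sum>h<H. (1 - m h) * G h x) + Q * (\<Sum>h<H. (1 - m h) * F h x)"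
    if "x \<in> space M" for x
    unfolding Lmask_def Lfull_def G_def F_def Q_def cst_def ell_curvature_def[symmetric]
    by (rule tokLoss_mask_diff_le) (use assms(6-9) that in auto)
  moreover have sums_int: "integrable M (\<lambda>x. \<Sum>h<H. (1 - m h) * G h x)"
      "integrable M (\<lambda>x. \<Sum>h<H. (1 - m h) * F h x)"
    using G_int F_int by (auto intro!: Bochner_Integration.integrable_sum)
  ultimately have "(\<integral>x. (Lmask x - Lfull x) \<partial>M)
      \<le> (\<integral>x. (\<Sum>h<H. (1 - m h) * G h x) + Q * (\<Sum>h<H. (1 - m h) * F h x) \<partial>M)"
    using assms(10,11) by (intro integral_mono) auto
  also have "\<dots> = (\<Sum>h<H. (1 - m h) * (\<integral>x. G h x \<partial>M)) + Q * (\<Sum>h<H. (1 - m h) * (\<integral>x. F h x \<partial>M))"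
    using G_int F_int sums_int by (simp add: Bochner_Integration.integral_sum)
  finally show ?thesis
    by (simp add: HIS_def G_def F_def Q_def)
qed

end
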